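(* Let $G$ be a unit square graph with realization $f$, let $\mathcal{P}$ be a clique-partition of $V(G)$, and let $\simeq$ be as defined in the context. Then for every $\simeq$-equivalence class $\mathcal{C}\subseteq\mathcal{M}(G)$ there is $b\in\{-1,1\}$ such that for all distinct $C,D\in\mathcal{C}$: every element of $z_f(C)_1$ is smaller than every element of $z_f(D)_1$ if and only if every element of $b\cdot z_f(C)_2$ is smaller than every element of $b\cdot z_f(D)_2$ (where $b\cdot S=\{bs\mid s\in S\}$).
   Context: A realization of $G$ is $f\colon V(G)\to\mathbb{R}^2$ with $vw\in E(G)$ iff $\|f(v)-f(w)\|_\infty\le1$ for distinct $v,w$; a unit square graph is a graph with a realization. A clique-partition is a partition of $V(G)$ into cliques. $\mathcal{M}(G)$ is the set of maximal cliques. $G^*_{\mathcal{M}}$ is the graph on $V(G)\sqcup\mathcal{M}(G)$ with edge set $E(G)\cup\{vC\mid C\in\mathcal{M}(G),v\in C\}$. A partition $\mathcal{Q}$ of the vertex set of a graph $H$ is stable if for all $X,Y\in\mathcal{Q}$ and $v,w\in X$, $|N_H(v)\cap Y|=|N_H(w)\cap Y|$. $\simeq$ is the equivalence relation whose classes form the coarsest partition of $V(G)\cup\mathcal{M}(G)$ that is stable with respect to $G^*_{\mathcal{M}}$ and refines $\mathcal{P}\cup\{\mathcal{M}(G)\}$. The center of a maximal clique $C$ is $z_f(C)=\{p\in\mathbb{R}^2\mid\forall v\in C:\|f(v)-p\|_\infty\le\tfrac12\}$ (a nonempty axis-parallel rectangle), and $z_f(C)_i$ is its projection to coordinate $i$;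 for distinct $\simeq$-equivalent maximal cliques these projections are disjoint intervals. *)

theory Defs
  imports Complex_Main "HOL-Library.Disjoint_Sets"
begin

definition graph :: "'a set \<Rightarrow> ('a \<Rightarrow> 'a \<Rightarrow> bool) \<Rightarrow> bool" where
  "graph V E \<longleftrightarrow> finite V \<and> (\<forall>v w. E v w \<longrightarrow> v \<in> V \<and> w \<in> V) \<and>
     (\<forall>v w. E v w \<longrightarrow> E w v) \<and> (\<forall>v. \<not> E v v)"

definition dist_inf :: "real \<times> real \<Rightarrow> real \<times> real \<Rightarrow> real" where
  "dist_inf p q = max \<bar>fst p - fst q\<bar> \<bar>snd p - snd q\<bar>"

definition realization :: "'a set \<Rightarrow> ('a \<Rightarrow> 'a \<Rightarrow> bool) \<Rightarrow> ('a \<Rightarrow> real \<times> real) \<Rightarrow> bool" where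
  "realization V E f \<longleftrightarrow>
     (\<forall>v\<in>V. \<forall>w\<in>V. v \<noteq> w \<longrightarrow> (E v w \<longleftrightarrow> dist_inf (f v) (f w) \<le> 1))"

definition clique :: "'a set \<Rightarrow> ('a \<Rightarrow> 'a \<Rightarrow> bool) \<Rightarrow> 'a set \<Rightarrow> bool" where
  "clique V E C \<longleftrightarrow> C \<subseteq> V \<and> (\<forall>v\<in>C. \<forall>w\<in>C. v \<noteq> w \<longrightarrow> E v w)"

definition max_cliques :: "'a set \<Rightarrow> ('a \<Rightarrow> 'a \<Rightarrow> bool) \<Rightarrow> 'a set set" where
  "max_cliques V E = {C. clique V E C \<and> (\<forall>D. clique V E D \<and> C \<subseteq> D \<longrightarrow> D = C)}"

definition clique_partition :: "'a set \<Rightarrow> ('a \<Rightarrow> 'a \<Rightarrow> bool) \<Rightarrow> 'a set set \<Rightarrow> bool" where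
  "clique_partition V E P \<longleftrightarrow> partition_on V P \<and> (\<forall>X\<in>P. clique V E X)"

definition gstar_vertices :: "'a set \<Rightarrow> ('a \<Rightarrow> 'a \<Rightarrow> bool) \<Rightarrow> ('a + 'a set) set" where
  "gstar_vertices V E = Inl ` V \<union> Inr ` max_cliques V E"

fun gstar_edge :: "'a set \<Rightarrow> ('a \<Rightarrow> 'a \<Rightarrow> bool) \<Rightarrow> ('a + 'a set) \<Rightarrow> ('a + 'a set) \<Rightarrow> bool" where
  "gstar_edge V E (Inl v) (Inl w) = E v w"
| "gstar_edge V E (Inl v) (Inr C) = (C \<in> max_cliques V E \<and> v \<in> C)"
| "gstar_edge V E (Inr C) (Inl v) = (C \<in> max_cliques V E \<and> v \<in> C)"
| "gstar_edge V E (Inr C) (Inr D) = False"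

definition nbhd :: "'b set \<Rightarrow> ('b \<Rightarrow> 'b \<Rightarrow> bool) \<Rightarrow> 'b \<Rightarrow> 'b set" where
  "nbhd W H v = {w\<in>W. H v w}"

definition stable_partition :: "'b set \<Rightarrow> ('b \<Rightarrow> 'b \<Rightarrow> bool) \<Rightarrow> 'b set set \<Rightarrow> bool" where
  "stable_partition W H Q \<longleftrightarrow> partition_on W Q \<and>
     (\<forall>X\<in>Q. \<forall>Y\<in>Q. \<forall>v\<in>X. \<forall>w\<in>X. card (nbhd W H v \<inter> Y) = card (nbhd W H w \<inter> Y))"

definition refines :: "'b set set \<Rightarrow> 'b set set \<Rightarrow> bool" where
  "refines Q R \<longleftrightarrow> (\<forall>X\<in>Q. \<exists>Y\<in>R. X \<subseteq> Y)"

definition base_partition :: "'a set \<Rightarrow> ('a \<Rightarrow> 'a \<Rightarrow> bool) \<Rightarrow> 'a set set \<Rightarrow> ('a + 'a set) set set" where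
  "base_partition V E P = (\<lambda>X. Inl ` X) ` P \<union> {Inr ` max_cliques V E}"

text \<open>Q is the coarsest partition of V \<union> M(G) that is stable w.r.t. G*_M and refines P \<union> {M(G)};
  its blocks are the equivalence classes of \<simeq>.\<close>
definition simeq_partition :: "'a set \<Rightarrow> ('a \<Rightarrow> 'a \<Rightarrow> bool) \<Rightarrow> 'a set set \<Rightarrow> ('a + 'a set) set set \<Rightarrow> bool" where
  "simeq_partition V E P Q \<longleftrightarrow>
     stable_partition (gstar_vertices V E) (gstar_edge V E) Q \<and>
     refines Q (base_partition V E P) \<and>
     (\<forall>Q'. stable_partition (gstar_vertices V E) (gstar_edge V E) Q' \<and>
           refines Q' (base_partition V E P) \<longrightarrow> refines Q' Q)"

definition center :: "('a \<Rightarrow> real \<times> real) \<Rightarrow> 'a set \<Rightarrow> (real \<times> real) set" where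
  "center f C = {p. \<forall>v\<in>C. dist_inf (f v) p \<le> 1/2}"

end

theory Submission
  imports Defs
begin

text \<open>Write \<open>X\<close> and \<open>Y\<close> for the coordinates of the realization. The maximal cliques of one
  \<open>\<simeq>\<close>-class are balanced: every vertex lies in a clique \<open>W\<close> (its own class) that meets all of
  them in equally many vertices, so a vertex of \<open>W\<close> in \<open>C\<close> but not in \<open>D\<close> can be exchanged
  for one in \<open>D\<close> but not in \<open>C\<close>. Together with maximality this exchange shows that the
  centers of two such cliques are disjoint in both coordinates, and that no clique of the class
  lies in \<open>Y\<close>-order between two others which are on the same side of it in \<open>X\<close>-order. So
  along the \<open>X\<close>-order the \<open>Y\<close>-order is monotone: increasing (\<open>b = 1\<close>) or decreasing
  (\<open>b = -1\<close>).\<close>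

text \<open>For cliques, \<open>precedes Z C D\<close> says that the projection of the center of \<open>C\<close> to the
  \<open>Z\<close>-axis lies entirely to the left of that of \<open>D\<close>.\<close>

definition precedes :: "('a \<Rightarrow> real) \<Rightarrow> 'a set \<Rightarrow> 'a set \<Rightarrow> bool" where
  "precedes Z C D \<longleftrightarrow> (\<exists>c\<in>C. \<exists>d\<in>D. Z c + 1 < Z d)"

definition narrow :: "('a \<Rightarrow> real) \<Rightarrow> 'a set \<Rightarrow> bool" where
  "narrow Z C \<longleftrightarrow> (\<forall>c\<in>C. \<forall>c'\<in>C. \<bar>Z c - Z c'\<bar> \<le> 1)"

definition slab :: "('a \<Rightarrow> real) \<Rightarrow> 'a set \<Rightarrow> real set" where
  "slab Z C = {t. \<forall>v\<in>C. \<bar>Z v - t\<bar> \<le> 1/2}"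

lemma precedes_neg: "precedes (\<lambda>v. - Z v) C D \<longleftrightarrow> precedes Z D C"
  unfolding precedes_def by force

lemma not_precedes_iff: "\<not> precedes Z C D \<and> \<not> precedes Z D C \<longleftrightarrow> (\<forall>c\<in>C. \<forall>d\<in>D. \<bar>Z c - Z d\<bar> \<le> 1)"
  unfolding precedes_def by (auto simp: abs_le_iff not_less; force)

lemma precedes_less_add_one:
  assumes "narrow Z C" "narrow Z D" "precedes Z C D" "c \<in> C" "d \<in> D"
  shows "Z c < Z d + 1"
proof -
  obtain c0 d0 where "c0 \<in> C" "d0 \<in> D" "Z c0 + 1 < Z d0"
    using assms(3) unfolding precedes_def by blast
  moreover have "\<bar>Z c - Z c0\<bar> \<le> 1" "\<bar>Z d0 - Z d\<bar> \<le> 1"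
    using assms calculation unfolding narrow_def by blast+
  ultimately show ?thesis by arith
qed

lemma precedes_irrefl: "narrow Z C \<Longrightarrow> \<not> precedes Z C C"
  unfolding narrow_def precedes_def by force

lemma precedes_trans:
  assumes "narrow Z B" "precedes Z A B" "precedes Z B C"
  shows "precedes Z A C"
  using assms unfolding precedes_def narrow_def by (smt (verit, best))

lemma precedes_asym:
  assumes "narrow Z C" "narrow Z D" "precedes Z C D"
  shows "\<not> precedes Z D C"
  using assms unfolding precedes_def narrow_def by (smt (verit, best))

lemma slab_eq_atLeastAtMost:
  assumes "finite C" "C \<noteq> {}"
  shows "slab Z C = {Max (Z ` C) - 1/2 .. Min (Z ` C) + 1/2}"
proof (rule set_eqI)
  fix t
  have "\<bar>a - t\<bar> \<le> 1/2 \<longleftrightarrow> a \<le> t + 1/2 \<and> t - 1/2 \<le> a" for a :: real by arith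
  then have "t \<in> slab Z C \<longleftrightarrow> (\<forall>v\<in>C. Z v \<le> t + 1/2) \<and> (\<forall>v\<in>C. t - 1/2 \<le> Z v)"
    unfolding slab_def by auto
  also have "\<dots> \<longleftrightarrow> Max (Z ` C) \<le> t + 1/2 \<and> t - 1/2 \<le> Min (Z ` C)"
    using assms by simp
  also have "\<dots> \<longleftrightarrow> t \<in> {Max (Z ` C) - 1/2 .. Min (Z ` C) + 1/2}"
    by auto
  finally show "t \<in> slab Z C \<longleftrightarrow> t \<in> {Max (Z ` C) - 1/2 .. Min (Z ` C) + 1/2}" .
qed

lemma narrow_Max_le_Min:
  assumes "finite C" "C \<noteq> {}" "narrow Z C"
  shows "Max (Z ` C) \<le> Min (Z ` C) + 1"
proof -
  have "Max (Z ` C) \<in> Z ` C" "Min (Z ` C) \<in> Z ` C" using assms by simp_all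
  then obtain c c' where "c \<in> C" "c' \<in> C" "Max (Z ` C) = Z c" "Min (Z ` C) = Z c'"
    by (metis imageE)
  then show ?thesis using assms(3) unfolding narrow_def by fastforce
qed

lemma slab_nonempty:
  assumes "finite C" "C \<noteq> {}" "narrow Z C"
  shows "slab Z C \<noteq> {}"
  using narrow_Max_le_Min[OF assms] unfolding slab_eq_atLeastAtMost[OF assms(1,2)] by simp

lemma narrow_scale:
  assumes "\<bar>b\<bar> \<le> 1" "narrow Z C"
  shows "narrow (\<lambda>v. b * Z v) C"
  using assms unfolding narrow_def
  by (metis abs_mult mult_le_one abs_ge_zero right_diff_distrib)

lemma interval_less_iff:
  fixes a b c d :: real
  assumes "a \<le> b" "c \<le> d"
  shows "(\<forall>x\<in>{a..b}. \<forall>y\<in>{c..d}. x < y) \<longleftrightarrow> b < c"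
proof
  assume "\<forall>x\<in>{a..b}. \<forall>y\<in>{c..d}. x < y"
  moreover have "b \<in> {a..b}" "c \<in> {c..d}" using assms by simp_all
  ultimately show "b < c" by blast
qed auto

lemma slab_less_iff:
  assumes "finite C" "C \<noteq> {}" "narrow Z C" "finite D" "D \<noteq> {}" "narrow Z D"
  shows "(\<forall>x\<in>slab Z C. \<forall>y\<in>slab Z D. x < y) \<longleftrightarrow> precedes Z C D"
proof -
  have "(\<forall>x\<in>slab Z C. \<forall>y\<in>slab Z D. x < y) \<longleftrightarrow> Min (Z ` C) + 1/2 < Max (Z ` D) - 1/2"
    using narrow_Max_le_Min[OF assms(1-3)] narrow_Max_le_Min[OF assms(4-6)]
    unfolding slab_eq_atLeastAtMost[OF assms(1,2)] slab_eq_atLeastAtMost[OF assms(4,5)]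
    by (intro interval_less_iff) linarith+
  also have "\<dots> \<longleftrightarrow> Min (Z ` C) < Max (Z ` D) - 1"
    by linarith
  also have "\<dots> \<longleftrightarrow> (\<exists>c\<in>C. Z c + 1 < Max (Z ` D))"
    using assms by (subst Min_less_iff) (auto simp: less_diff_eq)
  also have "\<dots> \<longleftrightarrow> precedes Z C D"
    using assms by (simp add: precedes_def Max_gr_iff)
  finally show ?thesis .
qed

lemma slab_scale:
  assumes "\<bar>b\<bar> = 1"
  shows "(\<lambda>s. b * s) ` slab Z C = slab (\<lambda>v. b * Z v) C"
proof -
  have bb: "b * b = 1"
    using abs_mult_self_eq[of b] assms by simp
  have "\<bar>b * Z v - t\<bar> = \<bar>Z v - b * t\<bar>" for v t
  proof -
    have "b * Z v - t = b * (Z v - b * t)"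
      by (simp add: right_diff_distrib mult.assoc[symmetric] bb)
    then show ?thesis by (simp add: abs_mult assms)
  qed
  moreover have "t \<in> (\<lambda>s. b * s) ` S \<longleftrightarrow> b * t \<in> S" for t and S :: "real set"
  proof
    assume "t \<in> (\<lambda>s. b * s) ` S"
    then obtain s where "s \<in> S" "t = b * s" by blast
    then show "b * t \<in> S" by (simp add: mult.assoc[symmetric] bb)
  next
    assume "b * t \<in> S"
    moreover have "t = b * (b * t)" by (simp add: mult.assoc[symmetric] bb)
    ultimately show "t \<in> (\<lambda>s. b * s) ` S" by blast
  qed
  ultimately show ?thesis
    unfolding slab_def set_eq_iff by (simp only: mem_Collect_eq simp_thms)
qed

lemma center_eq_slab_times: "center f C = slab (\<lambda>v. fst (f v)) C \<times> slab (\<lambda>v. snd (f v)) C"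
proof -
  have "dist_inf (f v) p \<le> 1/2 \<longleftrightarrow> \<bar>fst (f v) - fst p\<bar> \<le> 1/2 \<and> \<bar>snd (f v) - snd p\<bar> \<le> 1/2"
    for v p
    unfolding dist_inf_def by (rule max.bounded_iff)
  then show ?thesis
    unfolding center_def slab_def by (auto simp: mem_Times_iff)
qed

lemma finite_obtain_argmin:
  fixes g :: "'a \<Rightarrow> 'b :: linorder"
  assumes "finite S" "S \<noteq> {}"
  obtains x where "x \<in> S" "\<forall>y\<in>S. g x \<le> g y"
  using arg_min_if_finite[OF assms, of g] not_le by blast

lemma max_cliques_nonempty:
  assumes "C \<in> max_cliques V E" "D \<in> max_cliques V E" "C \<noteq> D"
  shows "C \<noteq> {}"
  using assms unfolding max_cliques_def by blast

lemma max_clique_memberI: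
  assumes "C \<in> max_cliques V E" "w \<in> V" "\<forall>c\<in>C. c \<noteq> w \<longrightarrow> E w c \<and> E c w"
  shows "w \<in> C"
proof -
  have "clique V E C"
    using assms(1) unfolding max_cliques_def by blast
  then have "clique V E (insert w C)"
    using assms(2,3) unfolding clique_def by auto
  then have "insert w C = C"
    using assms(1) unfolding max_cliques_def by blast
  then show ?thesis by blast
qed

lemma exists_diff_of_card_Int_eq:
  assumes "finite W" "card (A \<inter> W) = card (B \<inter> W)" "e \<in> W" "e \<in> A" "e \<notin> B"
  shows "\<exists>b\<in>W. b \<in> B \<and> b \<notin> A"
proof (rule ccontr)
  assume "\<not> ?thesis"
  then have "B \<inter> W \<subseteq> (A \<inter> W) - {e}" using assms by blast
  then have "card (B \<inter> W) \<le> card ((A \<inter> W) - {e})" using assms(1) by (intro card_mono) auto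
  also have "\<dots> < card (A \<inter> W)" using assms by (intro card_Diff1_less) auto
  finally show False using assms(2) by simp
qed

text \<open>A realization split into its two coordinate functions, so that swapping and reflecting
  the axes become substitutions.\<close>

definition square_realization :: "'a set \<Rightarrow> ('a \<Rightarrow> 'a \<Rightarrow> bool) \<Rightarrow> ('a \<Rightarrow> real) \<Rightarrow> ('a \<Rightarrow> real) \<Rightarrow> bool" where
  "square_realization V E X Y \<longleftrightarrow>
     (\<forall>v\<in>V. \<forall>w\<in>V. v \<noteq> w \<longrightarrow> (E v w \<longleftrightarrow> \<bar>X v - X w\<bar> \<le> 1 \<and> \<bar>Y v - Y w\<bar> \<le> 1))"

lemma realization_imp_square_realization:
  "realization V E f \<Longrightarrow> square_realization V E (\<lambda>v. fst (f v)) (\<lambda>v. snd (f v))"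
  unfolding realization_def square_realization_def dist_inf_def by simp

lemma square_realization_swap:
  "square_realization V E X Y \<Longrightarrow> square_realization V E Y X"
  unfolding square_realization_def by blast

lemma square_realization_neg:
  "square_realization V E X Y \<Longrightarrow> square_realization V E (\<lambda>v. - X v) Y"
  unfolding square_realization_def by (simp add: abs_minus_commute)

lemma square_realization_clique_close:
  assumes "square_realization V E X Y" "clique V E W" "a \<in> W" "b \<in> W"
  shows "\<bar>X a - X b\<bar> \<le> 1" "\<bar>Y a - Y b\<bar> \<le> 1"
proof -
  have "a = b \<or> a \<noteq> b \<and> E a b \<and> a \<in> V \<and> b \<in> V"
    using assms(2-4) unfolding clique_def by blast
  then have "\<bar>X a - X b\<bar> \<le> 1 \<and> \<bar>Y a - Y b\<bar> \<le> 1"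
    using assms(1) unfolding square_realization_def by auto
  then show "\<bar>X a - X b\<bar> \<le> 1" "\<bar>Y a - Y b\<bar> \<le> 1" by simp_all
qed

lemma square_realization_narrow:
  assumes "square_realization V E X Y" "clique V E W"
  shows "narrow X W" "narrow Y W"
  using square_realization_clique_close[OF assms] unfolding narrow_def by blast+

lemma square_realization_max_cliqueI:
  assumes "square_realization V E X Y" "C \<in> max_cliques V E" "w \<in> V"
    and "\<forall>c\<in>C. \<bar>X w - X c\<bar> \<le> 1 \<and> \<bar>Y w - Y c\<bar> \<le> 1"
  shows "w \<in> C"
proof (rule max_clique_memberI[OF assms(2,3)], intro ballI impI)
  fix c assume c: "c \<in> C" "c \<noteq> w"
  then have "c \<in> V" using assms(2) unfolding max_cliques_def clique_def by blast
  have "\<bar>X w - X c\<bar> \<le> 1 \<and> \<bar>Y w - Y c\<bar> \<le> 1" "\<bar>X c - X w\<bar> \<le> 1 \<and> \<bar>Y c - Y w\<bar> \<le> 1"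
    using assms(4) c(1) by (simp_all add: abs_minus_commute)
  then show "E w c \<and> E c w"
    using assms(1,3) \<open>c \<in> V\<close> c(2) unfolding square_realization_def by metis
qed

definition concordant :: "('a \<Rightarrow> real) \<Rightarrow> ('a \<Rightarrow> real) \<Rightarrow> 'a set \<Rightarrow> 'a set \<Rightarrow> bool" where
  "concordant X Y C D \<longleftrightarrow> precedes X C D \<and> precedes Y C D \<or> precedes X D C \<and> precedes Y D C"

lemma concordant_commute: "concordant X Y C D \<longleftrightarrow> concordant X Y D C"
  unfolding concordant_def by blast

definition balanced :: "'a set \<Rightarrow> ('a \<Rightarrow> 'a \<Rightarrow> bool) \<Rightarrow> 'a set set \<Rightarrow> bool" where
  "balanced V E K \<longleftrightarrow>
     (\<forall>v\<in>V. \<exists>W. v \<in> W \<and> clique V E W \<and> (\<forall>C\<in>K. \<forall>D\<in>K. card (C \<inter> W) = card (D \<inter> W)))"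

locale balanced_cliques =
  fixes V :: "'a set" and E :: "'a \<Rightarrow> 'a \<Rightarrow> bool" and K :: "'a set set"
  assumes finite_V: "finite V"
    and K_max_cliques: "K \<subseteq> max_cliques V E"
    and balanced: "balanced V E K"
begin

lemma K_max_clique: "C \<in> K \<Longrightarrow> C \<in> max_cliques V E"
  using K_max_cliques by blast

lemma K_clique: "C \<in> K \<Longrightarrow> clique V E C"
  using K_max_clique unfolding max_cliques_def by blast

lemma K_subset: "C \<in> K \<Longrightarrow> C \<subseteq> V"
  using K_clique unfolding clique_def by blast

lemma K_finite: "C \<in> K \<Longrightarrow> finite C"
  using K_subset finite_V finite_subset by blast

lemma K_narrow:
  assumes "square_realization V E X Y" "C \<in> K"
  shows "narrow X C" "narrow Y C"
  using square_realization_narrow[OF assms(1) K_clique[OF assms(2)]] by blast+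

lemma obtain_balanced_clique:
  assumes "v \<in> V"
  obtains W where "clique V E W" "v \<in> W"
    "\<And>C D c. C \<in> K \<Longrightarrow> D \<in> K \<Longrightarrow> c \<in> W \<Longrightarrow> c \<in> C \<Longrightarrow> c \<notin> D \<Longrightarrow> \<exists>d\<in>W. d \<in> D \<and> d \<notin> C"
proof -
  obtain W where W: "v \<in> W" "clique V E W" "\<forall>C\<in>K. \<forall>D\<in>K. card (C \<inter> W) = card (D \<inter> W)"
    using balanced assms unfolding balanced_def by blast
  have "finite W"
    using W(2) finite_V finite_subset unfolding clique_def by blast
  show thesis
  proof (rule that[OF W(2,1)])
    fix C D c assume "C \<in> K" "D \<in> K" "c \<in> W" "c \<in> C" "c \<notin> D"
    then show "\<exists>d\<in>W. d \<in> D \<and> d \<notin> C"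
      using exists_diff_of_card_Int_eq[OF \<open>finite W\<close>] W(3) by blast
  qed
qed

lemma not_precedes_subset:
  assumes SR: "square_realization V E X Y" and C: "C \<in> K" and D: "D \<in> K"
    and "\<not> precedes X C D" "\<not> precedes X D C" "\<not> precedes Y C D" "\<not> precedes Y D C"
  shows "D \<subseteq> C"
proof
  fix d assume "d \<in> D"
  moreover have "\<forall>d\<in>D. \<forall>c\<in>C. \<bar>X d - X c\<bar> \<le> 1" "\<forall>d\<in>D. \<forall>c\<in>C. \<bar>Y d - Y c\<bar> \<le> 1"
    using not_precedes_iff[of X D C] not_precedes_iff[of Y D C] assms(4-7) by blast+
  ultimately show "d \<in> C"
    using square_realization_max_cliqueI[OF SR K_max_clique[OF C]] K_subset[OF D] by blast
qed

lemma overlap_not_precedes: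
  assumes SR: "square_realization V E X Y" and C: "C \<in> K" and D: "D \<in> K"
    and XCD: "\<not> precedes X C D" and XDC: "\<not> precedes X D C"
  shows "\<not> precedes Y C D"
proof
  assume prec: "precedes Y C D"
  then obtain c0 d0 where c0: "c0 \<in> C" "d0 \<in> D" "Y c0 + 1 < Y d0"
    unfolding precedes_def by blast
  obtain c where c: "c \<in> C" "\<forall>c'\<in>C. Y c \<le> Y c'"
    using finite_obtain_argmin[OF K_finite[OF C], of Y] c0(1) by blast
  have "c \<notin> D"
  proof
    assume "c \<in> D"
    then have "\<bar>Y c - Y d0\<bar> \<le> 1"
      using K_narrow(2)[OF SR D] c0(2) unfolding narrow_def by blast
    moreover have "Y c \<le> Y c0" using c c0(1) by blast
    ultimately show False using c0(3) by arith
  qed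
  obtain W where W: "clique V E W" "c \<in> W"
    and exchange: "\<And>C D c. C \<in> K \<Longrightarrow> D \<in> K \<Longrightarrow> c \<in> W \<Longrightarrow> c \<in> C \<Longrightarrow> c \<notin> D \<Longrightarrow> \<exists>d\<in>W. d \<in> D \<and> d \<notin> C"
    using obtain_balanced_clique K_subset[OF C] c(1) by blast
  txt \<open>Since \<open>c\<close> is \<open>Y\<close>-lowest in \<open>C\<close>, its exchange partner in \<open>D\<close> is close to all of \<open>C\<close>.\<close>
  obtain d where d: "d \<in> W" "d \<in> D" "d \<notin> C"
    using exchange[OF C D W(2) c(1) \<open>c \<notin> D\<close>] by blast
  have "\<bar>Y d - Y c'\<bar> \<le> 1" if "c' \<in> C" for c'
  proof -
    have "Y c' < Y d + 1"
      using precedes_less_add_one[OF K_narrow(2)[OF SR C] K_narrow(2)[OF SR D] prec that d(2)] .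
    moreover have "Y d \<le> Y c + 1"
      using square_realization_clique_close(2)[OF SR W(1) d(1) W(2)] by arith
    moreover have "Y c \<le> Y c'" using c(2) that by blast
    ultimately show ?thesis by arith
  qed
  moreover have "\<forall>d\<in>D. \<forall>c\<in>C. \<bar>X d - X c\<bar> \<le> 1"
    using not_precedes_iff[of X D C] XCD XDC by blast
  ultimately have "d \<in> C"
    using square_realization_max_cliqueI[OF SR K_max_clique[OF C]] K_subset[OF D] d(2) by blast
  with d(3) show False ..
qed

lemma precedes_total:
  assumes SR: "square_realization V E X Y" and C: "C \<in> K" and D: "D \<in> K" and "C \<noteq> D"
  shows "precedes X C D \<or> precedes X D C"
proof (rule ccontr)
  assume "\<not> ?thesis"
  then have X: "\<not> precedes X C D" "\<not> precedes X D C" by blast+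
  then have "\<not> precedes Y C D" "\<not> precedes Y D C"
    using overlap_not_precedes[OF SR C D] overlap_not_precedes[OF SR D C] by blast+
  with X have "D \<subseteq> C" "C \<subseteq> D"
    using not_precedes_subset[OF SR C D] not_precedes_subset[OF SR D C] by blast+
  with \<open>C \<noteq> D\<close> show False by blast
qed

lemma K_precedes_asym:
  assumes "square_realization V E X Y" "C \<in> K" "D \<in> K" "precedes X C D"
  shows "\<not> precedes X D C"
  using precedes_asym K_narrow assms by blast

lemma K_precedes_distinct:
  assumes "square_realization V E X Y" "C \<in> K" "precedes X C D"
  shows "C \<noteq> D"
  using precedes_irrefl K_narrow assms by blast

lemma K_precedes_trans:
  assumes "square_realization V E X Y" "B \<in> K" "precedes X A B" "precedes X B C"
  shows "precedes X A C"
  using precedes_trans K_narrow assms by blast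

lemma no_crossing_right:
  assumes SR: "square_realization V E X Y" and C: "C \<in> K" and D: "D \<in> K" and F: "F \<in> K"
    and XCF: "precedes X C F" and XDF: "precedes X D F"
    and YCF: "precedes Y C F" and YFD: "precedes Y F D"
  shows False
proof -
  txt \<open>Exchange at an \<open>X\<close>-rightmost vertex \<open>e\<close> of \<open>F\<close> gives \<open>c \<in> C\<close> and \<open>d \<in> D\<close> outside \<open>F\<close>,
    both \<open>X\<close>-close to all of \<open>F\<close>; so they leave \<open>F\<close> vertically, \<open>c\<close> below and \<open>d\<close> above,
    too far apart to share the clique \<open>W\<close>.\<close>
  note narrow = K_narrow[OF SR]
  have "F \<noteq> {}" using XCF unfolding precedes_def by blast
  then obtain e where e: "e \<in> F" "\<forall>f\<in>F. - X e \<le> - X f"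
    using finite_obtain_argmin[OF K_finite[OF F], of "\<lambda>v. - X v"] by blast
  have e_notin: "e \<notin> A" if A: "A \<in> K" "precedes X A F" for A
  proof
    assume "e \<in> A"
    obtain a f0 where "a \<in> A" "f0 \<in> F" "X a + 1 < X f0"
      using A(2) unfolding precedes_def by blast
    moreover have "\<bar>X e - X a\<bar> \<le> 1"
      using narrow(1)[OF A(1)] \<open>e \<in> A\<close> \<open>a \<in> A\<close> unfolding narrow_def by blast
    ultimately show False using e(2) by force
  qed
  obtain W where W: "clique V E W" "e \<in> W"
    and exchange: "\<And>C D c. C \<in> K \<Longrightarrow> D \<in> K \<Longrightarrow> c \<in> W \<Longrightarrow> c \<in> C \<Longrightarrow> c \<notin> D \<Longrightarrow> \<exists>d\<in>W. d \<in> D \<and> d \<notin> C"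
    using obtain_balanced_clique K_subset[OF F] e(1) by blast
  have far: "\<exists>f\<in>F. \<bar>Y w - Y f\<bar> > 1"
    if w: "w \<in> W" "w \<notin> F" "w \<in> A" and A: "A \<in> K" "precedes X A F" for w A
  proof (rule ccontr)
    assume "\<not> ?thesis"
    moreover have "\<bar>X w - X f\<bar> \<le> 1" if "f \<in> F" for f
    proof -
      have "X w < X f + 1"
        using precedes_less_add_one[OF narrow(1)[OF A(1)] narrow(1)[OF F] A(2) w(3) that] .
      moreover have "\<bar>X w - X e\<bar> \<le> 1"
        using square_realization_clique_close(1)[OF SR W(1) w(1) W(2)] .
      moreover have "- X e \<le> - X f" using e(2) that by blast
      ultimately show ?thesis by arith
    qed
    ultimately have "\<forall>f\<in>F. \<bar>X w - X f\<bar> \<le> 1 \<and> \<bar>Y w - Y f\<bar> \<le> 1"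
      by (auto simp: not_less)
    then have "w \<in> F"
      using square_realization_max_cliqueI[OF SR K_max_clique[OF F]] K_subset[OF A(1)] w(3) by blast
    with w(2) show False ..
  qed
  obtain c where c: "c \<in> W" "c \<in> C" "c \<notin> F"
    using exchange[OF F C W(2) e(1) e_notin[OF C XCF]] by blast
  obtain d where d: "d \<in> W" "d \<in> D" "d \<notin> F"
    using exchange[OF F D W(2) e(1) e_notin[OF D XDF]] by blast
  obtain f where f: "f \<in> F" "\<bar>Y c - Y f\<bar> > 1"
    using far[OF c(1,3,2) C XCF] by blast
  obtain f' where f': "f' \<in> F" "\<bar>Y d - Y f'\<bar> > 1"
    using far[OF d(1,3,2) D XDF] by blast
  have "Y c < Y f + 1"
    using precedes_less_add_one[OF narrow(2)[OF C] narrow(2)[OF F] YCF c(2) f(1)] .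
  moreover have "Y f' < Y d + 1"
    using precedes_less_add_one[OF narrow(2)[OF F] narrow(2)[OF D] YFD f'(1) d(2)] .
  moreover have "\<bar>Y c - Y d\<bar> \<le> 1"
    using square_realization_clique_close(2)[OF SR W(1) c(1) d(1)] .
  moreover have "\<bar>Y f - Y f'\<bar> \<le> 1"
    using narrow(2)[OF F] f(1) f'(1) unfolding narrow_def by blast
  ultimately show False using f(2) f'(2) by arith
qed

lemma no_crossing_left:
  assumes SR: "square_realization V E X Y" and "C \<in> K" "D \<in> K" "F \<in> K"
    and "precedes X F C" "precedes X F D" "precedes Y C F" "precedes Y F D"
  shows False
  using no_crossing_right[OF square_realization_neg[OF SR]] assms by (simp add: precedes_neg)

lemma middle_not_peak:
  assumes SR: "square_realization V E X Y" and p: "p \<in> K" and q: "q \<in> K" and t: "t \<in> K"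
    and pq: "precedes X p q" and qt: "precedes X q t"
    and "precedes Y p q" "precedes Y t q"
  shows False
proof -
  have pt: "precedes X p t"
    using K_precedes_trans[OF SR q pq qt] .
  have "precedes Y p t \<or> precedes Y t p"
    using precedes_total[OF square_realization_swap[OF SR] p t K_precedes_distinct[OF SR p pt]] .
  then show False
    using no_crossing_right[OF SR p q t pt qt] no_crossing_left[OF SR t q p pt pq] assms(7,8)
    by blast
qed

lemma precedes_monotone:
  assumes SR: "square_realization V E X Y" and p: "p \<in> K" and q: "q \<in> K" and t: "t \<in> K"
    and pq: "precedes X p q" and qt: "precedes X q t"
  shows "precedes Y p q \<longleftrightarrow> precedes Y q t"
proof -
  have SR_neg: "square_realization V E X (\<lambda>v. - Y v)"
    using square_realization_swap[OF square_realization_neg[OF square_realization_swap[OF SR]]] .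
  have "precedes Y p q \<or> precedes Y q p" "precedes Y q t \<or> precedes Y t q"
    using precedes_total[OF square_realization_swap[OF SR]] p q t
      K_precedes_distinct[OF SR p pq] K_precedes_distinct[OF SR q qt] by blast+
  then show ?thesis
    using middle_not_peak[OF SR p q t pq qt] middle_not_peak[OF SR_neg p q t pq qt]
    by (auto simp: precedes_neg)
qed

lemma concordant_sorted:
  assumes SR: "square_realization V E X Y" and p: "p \<in> K" and q: "q \<in> K" and t: "t \<in> K"
    and pq: "precedes X p q" and qt: "precedes X q t"
  shows "concordant X Y p q \<longleftrightarrow> concordant X Y q t"
    and "concordant X Y p t \<longleftrightarrow> concordant X Y q t"
proof -
  note SR' = square_realization_swap[OF SR]
  have pt: "precedes X p t"
    using K_precedes_trans[OF SR q pq qt] .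
  have "precedes Y p q \<or> precedes Y q p"
    using precedes_total[OF SR' p q K_precedes_distinct[OF SR p pq]] .
  then have "precedes Y p q \<and> precedes Y q t \<and> precedes Y p t \<or>
      precedes Y q p \<and> precedes Y t q \<and> precedes Y t p"
    using precedes_monotone[OF SR p q t pq qt] precedes_total[OF SR' q t K_precedes_distinct[OF SR q qt]]
      K_precedes_trans[OF SR' q] K_precedes_asym[OF SR' p q] by blast
  then show "concordant X Y p q \<longleftrightarrow> concordant X Y q t"
    and "concordant X Y p t \<longleftrightarrow> concordant X Y q t"
    unfolding concordant_def using pq qt pt K_precedes_asym[OF SR] K_precedes_asym[OF SR'] p q t
    by meson+
qed

lemma concordant_triangle:
  assumes SR: "square_realization V E X Y" and p: "p \<in> K" and q: "q \<in> K" and t: "t \<in> K"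
    and "p \<noteq> q" "p \<noteq> t" "q \<noteq> t"
  shows "concordant X Y p q \<longleftrightarrow> concordant X Y p t"
proof -
  have sorted: "concordant X Y p a \<longleftrightarrow> concordant X Y p b"
    if a: "a \<in> K" and b: "b \<in> K" and "p \<noteq> a" "p \<noteq> b" "precedes X a b" for a b
  proof -
    consider "precedes X p a" | "precedes X b p" | "precedes X a p" "precedes X p b"
      using precedes_total[OF SR p a \<open>p \<noteq> a\<close>] precedes_total[OF SR p b \<open>p \<noteq> b\<close>] by blast
    then show ?thesis
    proof cases
      case 1
      then show ?thesis using concordant_sorted[OF SR p a b 1 \<open>precedes X a b\<close>] by blast
    next
      case 2
      then show ?thesis using concordant_sorted[OF SR a b p \<open>precedes X a b\<close> 2] concordant_commute by blast
    next
      case 3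
      then show ?thesis using concordant_sorted(1)[OF SR a p b 3] concordant_commute by blast
    qed
  qed
  show ?thesis
    using precedes_total[OF SR q t \<open>q \<noteq> t\<close>] sorted[OF q t] sorted[OF t q] assms(5-6) by blast
qed

lemma concordant_constant:
  assumes SR: "square_realization V E X Y" and "C \<in> K" "D \<in> K" "C' \<in> K" "D' \<in> K"
    and "C \<noteq> D" "C' \<noteq> D'"
  shows "concordant X Y C D \<longleftrightarrow> concordant X Y C' D'"
proof -
  have pivot: "concordant X Y A B \<longleftrightarrow> concordant X Y A B'"
    if "A \<in> K" "B \<in> K" "B' \<in> K" "A \<noteq> B" "A \<noteq> B'" for A B B'
    using concordant_triangle[OF SR that] that by (cases "B = B'") auto
  show ?thesis
  proof (cases "C = D'")
    case True
    then show ?thesis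
      using pivot[of C D C'] assms concordant_commute by metis
  next
    case False
    then show ?thesis
      using pivot[of C D D'] pivot[of D' C C'] assms concordant_commute by metis
  qed
qed

lemma orientation:
  assumes SR: "square_realization V E X Y"
  shows "\<exists>b\<in>{-1, 1}. \<forall>C\<in>K. \<forall>D\<in>K. C \<noteq> D \<longrightarrow> (precedes X C D \<longleftrightarrow> precedes (\<lambda>v. b * Y v) C D)"
proof -
  note SR' = square_realization_swap[OF SR]
  have by_concordance: "precedes X C D \<longleftrightarrow> (if concordant X Y C D then precedes Y C D else precedes Y D C)"
    if "C \<in> K" "D \<in> K" "C \<noteq> D" for C D
    using precedes_total[OF SR that] precedes_total[OF SR' that] K_precedes_asym[OF SR] K_precedes_asym[OF SR'] that
    unfolding concordant_def by metis
  show ?thesis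
  proof (cases "\<forall>C\<in>K. \<forall>D\<in>K. C \<noteq> D \<longrightarrow> concordant X Y C D")
    case True
    then show ?thesis
      using by_concordance by (intro bexI[of _ 1]) auto
  next
    case False
    then obtain C0 D0 where C0: "C0 \<in> K" "D0 \<in> K" "C0 \<noteq> D0" "\<not> concordant X Y C0 D0"
      by blast
    have "\<not> concordant X Y C D" if "C \<in> K" "D \<in> K" "C \<noteq> D" for C D
      using concordant_constant[OF SR that(1,2) C0(1,2) that(3) C0(3)] C0(4) by blast
    then show ?thesis
      using by_concordance by (intro bexI[of _ "-1"]) (auto simp: precedes_neg)
  qed
qed

end

lemma gstar_nbhd_Inr_Int:
  assumes "C \<in> max_cliques V E" "B \<subseteq> Inl ` V"
  shows "nbhd (gstar_vertices V E) (gstar_edge V E) (Inr C) \<inter> B = Inl ` (C \<inter> {u. Inl u \<in> B})"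
proof (rule set_eqI)
  fix z
  have "C \<subseteq> V" using assms(1) unfolding max_cliques_def clique_def by blast
  show "z \<in> nbhd (gstar_vertices V E) (gstar_edge V E) (Inr C) \<inter> B \<longleftrightarrow> z \<in> Inl ` (C \<inter> {u. Inl u \<in> B})"
  proof (cases z)
    case (Inl u)
    then show ?thesis
      using assms(1) \<open>C \<subseteq> V\<close> by (auto simp: nbhd_def gstar_vertices_def)
  next
    case (Inr D)
    then show ?thesis using assms(2) by blast
  qed
qed

lemma stable_class_balanced:
  assumes cp: "clique_partition V E P"
    and stable: "stable_partition (gstar_vertices V E) (gstar_edge V E) Q"
    and refines: "refines Q (base_partition V E P)"
    and "\<CC> \<in> Q" "\<CC> \<subseteq> Inr ` max_cliques V E"
  shows "balanced V E {C. Inr C \<in> \<CC>}"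
  unfolding balanced_def
proof (intro ballI)
  fix v assume "v \<in> V"
  then have "Inl v \<in> gstar_vertices V E" unfolding gstar_vertices_def by blast
  then obtain B where B: "B \<in> Q" "Inl v \<in> B"
    using stable unfolding stable_partition_def partition_on_def by blast
  then obtain X0 where X0: "X0 \<in> P" "B \<subseteq> Inl ` X0"
    using refines unfolding refines_def base_partition_def by blast
  txt \<open>\<open>W\<close> is the block of \<open>v\<close>; by stability every member \<open>C\<close> of \<open>\<CC>\<close> has the same
    number \<open>card (C \<inter> W)\<close> of neighbours in it.\<close>
  define W where "W = {u. Inl u \<in> B}"
  have "clique V E X0" using cp X0(1) unfolding clique_partition_def by blast
  then have "clique V E W" "B \<subseteq> Inl ` V"
    using X0(2) unfolding W_def clique_def by blast+
  moreover have "card (C \<inter> W) = card (D \<inter> W)" if "Inr C \<in> \<CC>" "Inr D \<in> \<CC>" for C D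
  proof -
    have "card (nbhd (gstar_vertices V E) (gstar_edge V E) (Inr C) \<inter> B) =
        card (nbhd (gstar_vertices V E) (gstar_edge V E) (Inr D) \<inter> B)"
      using stable \<open>\<CC> \<in> Q\<close> B(1) that unfolding stable_partition_def by blast
    moreover have "C \<in> max_cliques V E" "D \<in> max_cliques V E"
      using that \<open>\<CC> \<subseteq> Inr ` max_cliques V E\<close> by blast+
    ultimately show ?thesis
      using gstar_nbhd_Inr_Int[OF _ \<open>B \<subseteq> Inl ` V\<close>, of _ E] by (simp add: W_def card_image)
  qed
  moreover have "v \<in> W" unfolding W_def using B(2) by simp
  ultimately show "\<exists>W. v \<in> W \<and> clique V E W \<and>
      (\<forall>C\<in>{C. Inr C \<in> \<CC>}. \<forall>D\<in>{C. Inr C \<in> \<CC>}. card (C \<inter> W) = card (D \<inter> W))"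
    by blast
qed

lemma center_order_iff:
  assumes f: "realization V E f" and "finite V"
    and C: "C \<in> max_cliques V E" and D: "D \<in> max_cliques V E" and "C \<noteq> D" and b: "\<bar>b\<bar> = 1"
  shows "(\<forall>x\<in>fst ` center f C. \<forall>y\<in>fst ` center f D. x < y) \<longleftrightarrow> precedes (\<lambda>v. fst (f v)) C D"
    and "(\<forall>x\<in>(\<lambda>s. b * s) ` snd ` center f C. \<forall>y\<in>(\<lambda>s. b * s) ` snd ` center f D. x < y) \<longleftrightarrow>
      precedes (\<lambda>v. b * snd (f v)) C D"
proof -
  let ?X = "\<lambda>v. fst (f v)" and ?Y = "\<lambda>v. snd (f v)"
  have ne: "C \<noteq> {}" "D \<noteq> {}"
    using max_cliques_nonempty C D \<open>C \<noteq> D\<close> by metis+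
  have fin: "finite A" if "A \<in> max_cliques V E" for A
    using that \<open>finite V\<close> finite_subset unfolding max_cliques_def clique_def by blast
  have narrow: "narrow ?X A" "narrow ?Y A" if "A \<in> max_cliques V E" for A
    using square_realization_narrow[OF realization_imp_square_realization[OF f]] that
    unfolding max_cliques_def by blast+
  have slabs: "fst ` center f A = slab ?X A" "snd ` center f A = slab ?Y A"
    if "A \<in> max_cliques V E" "A \<noteq> {}" for A
    using slab_nonempty[OF fin[OF that(1)] that(2) narrow(1)[OF that(1)]]
      slab_nonempty[OF fin[OF that(1)] that(2) narrow(2)[OF that(1)]]
    unfolding center_eq_slab_times by simp_all
  have "\<bar>b\<bar> \<le> 1" using b by simp
  note narrow_b = narrow_scale[OF this narrow(2)]
  show "(\<forall>x\<in>fst ` center f C. \<forall>y\<in>fst ` center f D. x < y) \<longleftrightarrow> precedes ?X C D"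
    unfolding slabs(1)[OF C ne(1)] slabs(1)[OF D ne(2)]
    by (rule slab_less_iff[OF fin[OF C] ne(1) narrow(1)[OF C] fin[OF D] ne(2) narrow(1)[OF D]])
  show "(\<forall>x\<in>(\<lambda>s. b * s) ` snd ` center f C. \<forall>y\<in>(\<lambda>s. b * s) ` snd ` center f D. x < y) \<longleftrightarrow>
      precedes (\<lambda>v. b * ?Y v) C D"
    unfolding slabs(2)[OF C ne(1)] slabs(2)[OF D ne(2)] slab_scale[OF b]
    by (rule slab_less_iff[OF fin[OF C] ne(1) narrow_b[OF C] fin[OF D] ne(2) narrow_b[OF D]])
qed

theorem mainTheorem13:
  fixes V :: "'a set" and E :: "'a \<Rightarrow> 'a \<Rightarrow> bool" and f :: "'a \<Rightarrow> real \<times> real"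
    and P :: "'a set set" and Q :: "('a + 'a set) set set"
  assumes "graph V E"
    and "realization V E f"
    and "clique_partition V E P"
    and "simeq_partition V E P Q"
    and "\<CC> \<in> Q" and "\<CC> \<subseteq> Inr ` max_cliques V E"
  shows "\<exists>b::real \<in> {-1, 1}. \<forall>C D. Inr C \<in> \<CC> \<longrightarrow> Inr D \<in> \<CC> \<longrightarrow> C \<noteq> D \<longrightarrow>
           ((\<forall>x \<in> fst ` center f C. \<forall>y \<in> fst ` center f D. x < y) \<longleftrightarrow>
            (\<forall>x \<in> (\<lambda>s. b * s) ` (snd ` center f C). \<forall>y \<in> (\<lambda>s. b * s) ` (snd ` center f D). x < y))"
proof -
  define K where "K = {C. Inr C \<in> \<CC>}"
  have "finite V" using assms(1) unfolding graph_def by blast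
  have "stable_partition (gstar_vertices V E) (gstar_edge V E) Q" "refines Q (base_partition V E P)"
    using assms(4) unfolding simeq_partition_def by blast+
  then have "balanced V E K"
    unfolding K_def by (rule stable_class_balanced[OF assms(3) _ _ assms(5,6)])
  moreover have "K \<subseteq> max_cliques V E" using assms(6) unfolding K_def by blast
  ultimately interpret balanced_cliques V E K
    using \<open>finite V\<close> by unfold_locales
  obtain b :: real where b: "b \<in> {-1, 1}"
    and orient: "\<forall>C\<in>K. \<forall>D\<in>K. C \<noteq> D \<longrightarrow> (precedes (\<lambda>v. fst (f v)) C D \<longleftrightarrow> precedes (\<lambda>v. b * snd (f v)) C D)"
    using orientation[OF realization_imp_square_realization[OF assms(2)]] by blast
  show ?thesis
  proof (intro bexI[OF _ b] allI impI)
    fix C D assume "Inr C \<in> \<CC>" "Inr D \<in> \<CC>" "C \<noteq> D"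
    then have CD: "C \<in> K" "D \<in> K" unfolding K_def by simp_all
    have "\<bar>b\<bar> = 1" using b by auto
    note center_iff = center_order_iff[OF assms(2) \<open>finite V\<close> K_max_clique[OF CD(1)] K_max_clique[OF CD(2)] \<open>C \<noteq> D\<close> this]
    show "(\<forall>x \<in> fst ` center f C. \<forall>y \<in> fst ` center f D. x < y) \<longleftrightarrow>
        (\<forall>x \<in> (\<lambda>s. b * s) ` (snd ` center f C). \<forall>y \<in> (\<lambda>s. b * s) ` (snd ` center f D). x < y)"
      unfolding center_iff using orient CD \<open>C \<noteq> D\<close> by blast
  qed
qed

end
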